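(* Let $K,G:[0,\infty)\to\mathbb{R}$ be continuous, let $f$ solve $f''+Kf=0$ with $f>0$ on $(0,\infty)$ and $\int_1^\infty f(t)^{-2}dt<\infty$, and let $m$ solve $m''+Gm=0$ with $m(0)=f(0)$, $m'(0)=f'(0)$. Suppose the support of $G-K$ is contained in a bounded interval $[a,b]\subset[1,\infty)$. Then for all $t\ge 0$, $$|(m'f-mf')(t)|\le(\alpha(m)+1)\,\|G-K\|_2\,\|f^2|_{[a,b]}\|_2,$$ where $\|G-K\|_2:=\sqrt{\int_0^\infty|G-K|^2dt}$, $\|f^2|_{[a,b]}\|_2:=\sqrt{\int_a^b f(t)^4dt}$, $\sigma(t):=m(t)/f(t)-1$ for $t>0$, and $\alpha(m):=\sup_{t>0}|\sigma(t)|$. *)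

theory Defs
  imports "HOL-Analysis.Analysis"
begin

end

theory Submission
  imports Defs
begin

(* The Wronskian W = m' f - m f' satisfies W(0) = 0 and W' = (K - G) m f, so
   |W(t)| <= integral over [a,b] of |(K - G) m f|.  Since f > 0 there, the
   definition of alpha(m) gives |m| <= (alpha(m) + 1) f, and Cauchy-Schwarz for
   (K - G) and f^2 yields the bound (alpha(m) + 1) ||G - K||_2 ||f^2|[a,b]||_2.
   If alpha(m) is infinite the bound is trivial, except when one of the two L2
   norms vanishes; then the integral of |(K - G) m f| itself vanishes. *)

(* The optimal weight sqrt B / sqrt A may not
   exist (A = 0), so we use the perturbed weights (sqrt B + d) / (sqrt A + d). *)
lemma le_sqrt_mult_if_weighted_am_bound:
  fixes A B C :: real
  assumes A: "A \<ge> 0" and B: "B \<ge> 0"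
    and bound: "\<And>l. l > 0 \<Longrightarrow> C \<le> (l * A + B / l) / 2"
  shows "C \<le> sqrt A * sqrt B"
proof -
  have shrink: "x / (sqrt x + d) \<le> sqrt x" if "x \<ge> 0" "d > 0" for x d :: real
  proof -
    have "x = sqrt x * sqrt x" using that by simp
    then have "x \<le> sqrt x * (sqrt x + d)" using that by (simp add: algebra_simps)
    then show ?thesis using that by (simp add: divide_le_eq add_nonneg_pos)
  qed
  have approx: "C \<le> sqrt A * sqrt B + d * (sqrt A + sqrt B)" if d: "d > 0" for d
  proof -
    define l where "l = (sqrt B + d) / (sqrt A + d)"
    have l: "l > 0" using A B d by (simp add: l_def add_nonneg_pos)
    have "l * A = (sqrt B + d) * (A / (sqrt A + d))" by (simp add: l_def)
    also have "\<dots> \<le> (sqrt B + d) * sqrt A"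
      using shrink[OF A d] B d by (intro mult_left_mono) auto
    finally have lA: "l * A \<le> (sqrt B + d) * sqrt A" .
    have "B / l = (sqrt A + d) * (B / (sqrt B + d))" by (simp add: l_def)
    also have "\<dots> \<le> (sqrt A + d) * sqrt B"
      using shrink[OF B d] A d by (intro mult_left_mono) auto
    finally have Bl: "B / l \<le> (sqrt A + d) * sqrt B" .
    have "d * (sqrt A + sqrt B) \<ge> 0" using A B d by simp
    then show ?thesis using bound[OF l] lA Bl by (simp add: algebra_simps)
  qed
  show ?thesis
  proof (rule field_le_epsilon)
    fix e :: real assume e: "e > 0"
    define d where "d = e / (sqrt A + sqrt B + 1)"
    have pos: "sqrt A + sqrt B + 1 > 0" using A B by (simp add: add_nonneg_pos)
    then have d: "d > 0" using e by (simp add: d_def)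
    have "d * (sqrt A + sqrt B) \<le> d * (sqrt A + sqrt B + 1)" using d by simp
    also have "\<dots> = e" using pos by (simp add: d_def)
    finally have "d * (sqrt A + sqrt B) \<le> e" .
    then show "C \<le> sqrt A * sqrt B + e" using approx[OF d] by linarith
  qed
qed
(* Cauchy-Schwarz inequality for the Henstock-Kurzweil integral of real functions,
   obtained by integrating |u v| <= (l u^2 + v^2 / l) / 2. *)
lemma integral_cauchy_schwarz:
  fixes u v :: "'a::euclidean_space \<Rightarrow> real"
  assumes u: "(\<lambda>s. (u s)\<^sup>2) integrable_on S" and v: "(\<lambda>s. (v s)\<^sup>2) integrable_on S"
    and uv: "(\<lambda>s. \<bar>u s * v s\<bar>) integrable_on S"
  shows "integral S (\<lambda>s. \<bar>u s * v s\<bar>)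
    \<le> sqrt (integral S (\<lambda>s. (u s)\<^sup>2)) * sqrt (integral S (\<lambda>s. (v s)\<^sup>2))"
proof (rule le_sqrt_mult_if_weighted_am_bound)
  show "integral S (\<lambda>s. (u s)\<^sup>2) \<ge> 0" "integral S (\<lambda>s. (v s)\<^sup>2) \<ge> 0"
    using u v by (auto intro: integral_nonneg)
  fix l :: real assume l: "l > 0"
  have pointwise: "\<bar>u s * v s\<bar> \<le> (l * (u s)\<^sup>2 + (v s)\<^sup>2 / l) / 2" for s
  proof -
    have "0 \<le> (l * \<bar>u s\<bar> - \<bar>v s\<bar>)\<^sup>2" by simp
    then have "2 * l * \<bar>u s * v s\<bar> \<le> l * (l * (u s)\<^sup>2) + (v s)\<^sup>2"
      by (simp add: power2_eq_square abs_mult algebra_simps)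
    then show ?thesis using l by (simp add: field_simps)
  qed
  have "((\<lambda>s. (l * (u s)\<^sup>2 + (v s)\<^sup>2 / l) / 2) has_integral
      (l * integral S (\<lambda>s. (u s)\<^sup>2) + integral S (\<lambda>s. (v s)\<^sup>2) / l) / 2) S"
    using u v by (intro has_integral_divide has_integral_add has_integral_mult_right integrable_integral)
  then show "integral S (\<lambda>s. \<bar>u s * v s\<bar>)
      \<le> (l * integral S (\<lambda>s. (u s)\<^sup>2) + integral S (\<lambda>s. (v s)\<^sup>2) / l) / 2"
    using uv pointwise by (intro has_integral_le[OF integrable_integral]) auto
qed

lemma has_integral_vanishing_outside:
  fixes g :: "'a::euclidean_space \<Rightarrow> 'b::banach"
  assumes "T \<subseteq> S" and "\<And>x. x \<in> S \<Longrightarrow> x \<notin> T \<Longrightarrow> g x = 0"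
  shows "(g has_integral I) S \<longleftrightarrow> (g has_integral I) T"
proof -
  have "(g has_integral I) S \<longleftrightarrow> ((\<lambda>x. if x \<in> T then g x else 0) has_integral I) S"
    using assms(2) by (intro has_integral_cong) auto
  also have "\<dots> \<longleftrightarrow> (g has_integral I) T"
    using assms(1) by (rule has_integral_restrict)
  finally show ?thesis .
qed

lemma integral_vanishing_outside:
  fixes g :: "'a::euclidean_space \<Rightarrow> 'b::banach"
  assumes "T \<subseteq> S" and "\<And>x. x \<in> S \<Longrightarrow> x \<notin> T \<Longrightarrow> g x = 0" and "g integrable_on T"
  shows "integral S g = integral T g"
  using assms by (metis has_integral_vanishing_outside integrable_integral integral_unique)

lemma abs_integral_le_of_support:
  fixes h :: "real \<Rightarrow> real"
  assumes int: "(h has_integral I) {c..t}" and "c \<le> a"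
    and vanish: "\<And>s. s \<in> {c..t} \<Longrightarrow> s \<notin> {a..b} \<Longrightarrow> h s = 0"
    and cont: "continuous_on {a..b} h"
  shows "\<bar>I\<bar> \<le> integral {a..b} (\<lambda>s. \<bar>h s\<bar>)"
proof -
  have sub: "{a..min b t} \<subseteq> {a..b}" by auto
  have "(h has_integral I) {a..min b t}"
    using int \<open>c \<le> a\<close> vanish by (subst (asm) has_integral_vanishing_outside) auto
  then have "\<bar>I\<bar> = norm (integral {a..min b t} h)" by (simp add: integral_unique)
  also have "\<dots> \<le> integral {a..min b t} (\<lambda>s. \<bar>h s\<bar>)"
    using cont sub
    by (intro integral_norm_bound_integral integrable_continuous_interval continuous_intros)
       (auto intro: continuous_on_subset)
  also have "\<dots> \<le> integral {a..b} (\<lambda>s. \<bar>h s\<bar>)"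
    using cont sub
    by (intro integral_subset_le integrable_continuous_interval continuous_intros)
       (auto intro: continuous_on_subset)
  finally show ?thesis .
qed

(* For solutions of f'' = -K f and m'' = -G m the Wronskian m' f - m f' has
   derivative (K - G) m f: the terms m' f' cancel. *)
lemma wronskian_has_derivative:
  fixes f f' m m' :: "real \<Rightarrow> real"
  assumes "(f has_real_derivative f' t) (at t within S)"
    and "(f' has_real_derivative (- K t * f t)) (at t within S)"
    and "(m has_real_derivative m' t) (at t within S)"
    and "(m' has_real_derivative (- G t * m t)) (at t within S)"
  shows "((\<lambda>s. m' s * f s - m s * f' s) has_real_derivative (K t - G t) * m t * f t)
    (at t within S)"
  using DERIV_diff[OF DERIV_mult[OF assms(4,1)] DERIV_mult[OF assms(3,2)]]
  by (rule DERIV_cong) (simp add: algebra_simps)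

(* With equal initial data the Wronskian vanishes at 0, so by the fundamental
   theorem of calculus it equals the integral of (K - G) m f over [0,t]. *)
lemma wronskian_has_integral:
  fixes f f' m m' K G :: "real \<Rightarrow> real"
  assumes f_deriv: "\<And>s. s \<ge> 0 \<Longrightarrow> (f has_real_derivative f' s) (at s within {0..})"
    and f'_deriv: "\<And>s. s \<ge> 0 \<Longrightarrow> (f' has_real_derivative (- K s * f s)) (at s within {0..})"
    and m_deriv: "\<And>s. s \<ge> 0 \<Longrightarrow> (m has_real_derivative m' s) (at s within {0..})"
    and m'_deriv: "\<And>s. s \<ge> 0 \<Longrightarrow> (m' has_real_derivative (- G s * m s)) (at s within {0..})"
    and m0: "m 0 = f 0" and m'0: "m' 0 = f' 0" and t: "t \<ge> 0"
  shows "((\<lambda>s. (K s - G s) * m s * f s) has_integral (m' t * f t - m t * f' t)) {0..t}"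
proof -
  define W where "W s = m' s * f s - m s * f' s" for s
  have "(W has_real_derivative (K s - G s) * m s * f s) (at s within {0..t})"
    if "s \<in> {0..t}" for s
  proof (rule DERIV_subset)
    show "(W has_real_derivative (K s - G s) * m s * f s) (at s within {0..})"
      unfolding W_def using that
      by (intro wronskian_has_derivative f_deriv f'_deriv m_deriv m'_deriv) auto
  qed auto
  then have "((\<lambda>s. (K s - G s) * m s * f s) has_integral W t - W 0) {0..t}"
    using t by (intro fundamental_theorem_of_calculus)
      (auto simp flip: has_real_derivative_iff_has_vector_derivative)
  moreover have "W 0 = 0" using m0 m'0 by (simp add: W_def)
  ultimately show ?thesis by (simp add: W_def)
qed

lemma ereal_sup_abs_nonneg:
  fixes g :: "'a \<Rightarrow> real"
  assumes "x \<in> A"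
  shows "0 \<le> (SUP y\<in>A. ereal \<bar>g y\<bar>)"
  using assms by (intro order_trans[OF _ SUP_upper[of x]]) auto

lemma abs_le_of_ratio_sup:
  fixes m f :: "'a \<Rightarrow> real"
  assumes sup: "(SUP y\<in>A. ereal \<bar>m y / f y - 1\<bar>) = ereal R" and "x \<in> A" and "f x \<noteq> 0"
  shows "\<bar>m x\<bar> \<le> (R + 1) * \<bar>f x\<bar>"
proof -
  have "ereal \<bar>m x / f x - 1\<bar> \<le> ereal R"
    using SUP_upper[OF \<open>x \<in> A\<close>, of "\<lambda>y. ereal \<bar>m y / f y - 1\<bar>"] sup by simp
  then have "\<bar>m x / f x\<bar> \<le> R + 1" by simp
  then show ?thesis using \<open>f x \<noteq> 0\<close> by (simp add: abs_div divide_le_eq)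
qed

(* Bookkeeping in the extended reals: to prove C <= (S + 1) X for S = alpha(m) it
   suffices to treat finite S = R, and the case X = 0 (where infinity * 0 = 0). *)
lemma ereal_le_scaled_by_sup:
  fixes S :: ereal and C X :: real
  assumes "S \<ge> 0" and "X \<ge> 0"
    and finite: "\<And>R. S = ereal R \<Longrightarrow> C \<le> (R + 1) * X"
    and degenerate: "X = 0 \<Longrightarrow> C \<le> 0"
  shows "ereal C \<le> (S + 1) * ereal X"
proof (cases S)
  case (real R)
  then show ?thesis using finite by simp
next
  case PInf
  show ?thesis
  proof (cases "X = 0")
    case True
    then show ?thesis using degenerate by (simp flip: zero_ereal_def)
  next
    case False
    then show ?thesis using PInf \<open>X \<ge> 0\<close> by simp
  qed
qed (use \<open>S \<ge> 0\<close> in simp)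

(* If |m| <= c |f| on [a,b] then the integral of |p m f| is at most
   c * ||p||_2 * ||f^2||_2, by Cauchy-Schwarz applied to p and f^2. *)
lemma integral_abs_bound_by_comparison:
  fixes p m f :: "real \<Rightarrow> real" and c :: real
  assumes cont: "continuous_on {a..b} p" "continuous_on {a..b} m" "continuous_on {a..b} f"
    and c: "c \<ge> 0" and comparison: "\<And>s. s \<in> {a..b} \<Longrightarrow> \<bar>m s\<bar> \<le> c * \<bar>f s\<bar>"
  shows "integral {a..b} (\<lambda>s. \<bar>p s * (m s * f s)\<bar>)
    \<le> c * (sqrt (integral {a..b} (\<lambda>s. (p s)\<^sup>2)) * sqrt (integral {a..b} (\<lambda>s. (f s) ^ 4)))"
proof -
  have "\<bar>p s * (m s * f s)\<bar> \<le> c * \<bar>p s * (f s)\<^sup>2\<bar>" if "s \<in> {a..b}" for s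
  proof -
    have "\<bar>p s * (m s * f s)\<bar> = \<bar>p s\<bar> * (\<bar>m s\<bar> * \<bar>f s\<bar>)" by (simp add: abs_mult)
    also have "\<dots> \<le> \<bar>p s\<bar> * (c * \<bar>f s\<bar> * \<bar>f s\<bar>)"
      using comparison[OF that] by (intro mult_left_mono mult_right_mono) auto
    also have "\<dots> = c * \<bar>p s * (f s)\<^sup>2\<bar>" using c by (simp add: abs_mult power2_eq_square)
    finally show ?thesis .
  qed
  then have "integral {a..b} (\<lambda>s. \<bar>p s * (m s * f s)\<bar>)
      \<le> integral {a..b} (\<lambda>s. c * \<bar>p s * (f s)\<^sup>2\<bar>)"
    using cont by (intro integral_le integrable_continuous_interval continuous_intros) auto
  also have "\<dots> = c * integral {a..b} (\<lambda>s. \<bar>p s * (f s)\<^sup>2\<bar>)" by simp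
  also have "\<dots> \<le> c * (sqrt (integral {a..b} (\<lambda>s. (p s)\<^sup>2))
      * sqrt (integral {a..b} (\<lambda>s. ((f s)\<^sup>2)\<^sup>2)))"
    using cont c
    by (intro mult_left_mono integral_cauchy_schwarz integrable_continuous_interval
        continuous_intros) auto
  finally show ?thesis by simp
qed

(* Without any comparison of m and f, the integral of |p m f| still vanishes as soon
   as ||p||_2 = 0 or ||f^2||_2 = 0: Cauchy-Schwarz for the factorisations
   p * (m f) and (p m / f) * f^2 respectively.  This covers the case alpha(m) = infinity. *)
lemma integral_abs_vanishes_if_L2_factor_vanishes:
  fixes p m f :: "real \<Rightarrow> real"
  assumes cont: "continuous_on {a..b} p" "continuous_on {a..b} m" "continuous_on {a..b} f"
    and nonzero: "\<And>s. s \<in> {a..b} \<Longrightarrow> f s \<noteq> 0"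
    and zero: "sqrt (integral {a..b} (\<lambda>s. (p s)\<^sup>2)) * sqrt (integral {a..b} (\<lambda>s. (f s) ^ 4)) = 0"
  shows "integral {a..b} (\<lambda>s. \<bar>p s * (m s * f s)\<bar>) \<le> 0"
proof -
  have via_p: "integral {a..b} (\<lambda>s. \<bar>p s * (m s * f s)\<bar>)
      \<le> sqrt (integral {a..b} (\<lambda>s. (p s)\<^sup>2)) * sqrt (integral {a..b} (\<lambda>s. (m s * f s)\<^sup>2))"
    using cont by (intro integral_cauchy_schwarz integrable_continuous_interval continuous_intros)
  define q where "q s = p s * m s / f s" for s
  have cont_q: "continuous_on {a..b} q"
    unfolding q_def using cont nonzero by (intro continuous_intros) auto
  have "integral {a..b} (\<lambda>s. \<bar>p s * (m s * f s)\<bar>) = integral {a..b} (\<lambda>s. \<bar>q s * (f s)\<^sup>2\<bar>)"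
    using nonzero by (intro integral_cong) (simp add: q_def power2_eq_square)
  also have "\<dots> \<le> sqrt (integral {a..b} (\<lambda>s. (q s)\<^sup>2))
      * sqrt (integral {a..b} (\<lambda>s. ((f s)\<^sup>2)\<^sup>2))"
    using cont cont_q
    by (intro integral_cauchy_schwarz integrable_continuous_interval continuous_intros)
  finally have via_f: "integral {a..b} (\<lambda>s. \<bar>p s * (m s * f s)\<bar>)
      \<le> sqrt (integral {a..b} (\<lambda>s. (q s)\<^sup>2)) * sqrt (integral {a..b} (\<lambda>s. (f s) ^ 4))"
    by simp
  show ?thesis using zero via_p via_f by auto
qed

theorem lemma2p2:
  fixes K G f f' m m' :: "real \<Rightarrow> real" and a b :: real
  assumes contK: "continuous_on {0..} K"
    and contG: "continuous_on {0..} G"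
    and f_deriv: "\<And>t. t \<ge> 0 \<Longrightarrow> (f has_real_derivative f' t) (at t within {0..})"
    and f'_deriv: "\<And>t. t \<ge> 0 \<Longrightarrow> (f' has_real_derivative (- K t * f t)) (at t within {0..})"
    and f_pos: "\<And>t. t > 0 \<Longrightarrow> f t > 0"
    and f_int: "(\<lambda>t. 1 / (f t)\<^sup>2) integrable_on {1..}"
    and m_deriv: "\<And>t. t \<ge> 0 \<Longrightarrow> (m has_real_derivative m' t) (at t within {0..})"
    and m'_deriv: "\<And>t. t \<ge> 0 \<Longrightarrow> (m' has_real_derivative (- G t * m t)) (at t within {0..})"
    and m0: "m 0 = f 0" and m'0: "m' 0 = f' 0"
    and ab: "1 \<le> a" "a \<le> b"
    and supp: "\<And>t. t \<ge> 0 \<Longrightarrow> t \<notin> {a..b} \<Longrightarrow> G t = K t"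
    and t: "t \<ge> 0"
  shows "ereal \<bar>m' t * f t - m t * f' t\<bar>
    \<le> ((SUP s\<in>{0<..}. ereal \<bar>m s / f s - 1\<bar>) + 1)
       * ereal (sqrt (integral {0..} (\<lambda>s. \<bar>G s - K s\<bar>\<^sup>2))
                * sqrt (integral {a..b} (\<lambda>s. (f s) ^ 4)))"
proof -
  define p where "p s = K s - G s" for s
  define C where "C = integral {a..b} (\<lambda>s. \<bar>p s * (m s * f s)\<bar>)"
  define X where "X = sqrt (integral {a..b} (\<lambda>s. (p s)\<^sup>2)) * sqrt (integral {a..b} (\<lambda>s. (f s) ^ 4))"
  define S where "S = (SUP s\<in>{0<..}. ereal \<bar>m s / f s - 1\<bar>)"
  have ab_sub: "{a..b} \<subseteq> {0..}" using ab by auto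
  have cont_f: "continuous_on {a..b} f" and cont_m: "continuous_on {a..b} m"
    using DERIV_continuous_on[OF f_deriv] DERIV_continuous_on[OF m_deriv] ab_sub
    by (auto intro: continuous_on_subset)
  have cont_p: "continuous_on {a..b} p"
    unfolding p_def using contK contG ab_sub by (intro continuous_intros) (auto intro: continuous_on_subset)
  have f_pos_ab: "f s > 0" if "s \<in> {a..b}" for s using that ab f_pos by auto
  have p_vanish: "p s = 0" if "s \<ge> 0" "s \<notin> {a..b}" for s using supp[OF that] by (simp add: p_def)

  (* W(t) is the integral of W' = p m f, which is supported in [a,b]. *)
  have "((\<lambda>s. p s * (m s * f s)) has_integral (m' t * f t - m t * f' t)) {0..t}"
    using wronskian_has_integral[OF f_deriv f'_deriv m_deriv m'_deriv m0 m'0 t]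
    by (simp add: p_def mult_ac)
  then have wronskian_le: "\<bar>m' t * f t - m t * f' t\<bar> \<le> C"
    unfolding C_def using ab p_vanish cont_p cont_m cont_f
    by (intro abs_integral_le_of_support[where c = 0]) (auto intro!: continuous_intros)

  have L2_eq: "integral {0..} (\<lambda>s. \<bar>G s - K s\<bar>\<^sup>2) = integral {a..b} (\<lambda>s. (p s)\<^sup>2)"
  proof -
    have "(\<lambda>s. \<bar>G s - K s\<bar>\<^sup>2) = (\<lambda>s. (p s)\<^sup>2)" by (simp add: p_def power2_commute)
    then show ?thesis using ab_sub p_vanish cont_p
      by (auto intro!: integral_vanishing_outside integrable_continuous_interval continuous_intros)
  qed

  have C_le: "ereal C \<le> (S + 1) * ereal X"
  proof (rule ereal_le_scaled_by_sup)
    show S_nonneg: "S \<ge> 0" unfolding S_def by (rule ereal_sup_abs_nonneg[of 1]) simp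
    show "X \<ge> 0"
      unfolding X_def using cont_p cont_f
      by (intro mult_nonneg_nonneg real_sqrt_ge_zero integral_nonneg
          integrable_continuous_interval continuous_intros) auto
    fix R assume S: "S = ereal R"
    then have "R \<ge> 0" using S_nonneg by simp
    moreover have "\<bar>m s\<bar> \<le> (R + 1) * \<bar>f s\<bar>" if "s \<in> {a..b}" for s
      using S that ab f_pos_ab[OF that] unfolding S_def
      by (intro abs_le_of_ratio_sup[where A = "{0<..}"]) auto
    ultimately show "C \<le> (R + 1) * X"
      unfolding C_def X_def using cont_p cont_m cont_f ab
      by (intro integral_abs_bound_by_comparison) auto
  next
    assume "X = 0"
    then show "C \<le> 0"
      unfolding C_def X_def using cont_p cont_m cont_f f_pos_ab
      by (intro integral_abs_vanishes_if_L2_factor_vanishes) force+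
  qed
  have "ereal \<bar>m' t * f t - m t * f' t\<bar> \<le> ereal C" using wronskian_le by simp
  also note C_le
  finally show ?thesis unfolding L2_eq S_def X_def .
qed

end
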